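(* Fix an integer $\ell\ge1$. For real $k\ge 0$ let $F_k(p)=(1-p)^{-k}\sum_{j=1}^{\ell}\binom{\ell}{j}\frac{1}{1-(1-2p)^j}$ for $p\in(0,1)$. Then, as $k\to\infty$, \[ \min_{p\in(0,1)}F_k(p)=(1+o(1))\,2^\ell e\,(bk+a), \] and also $\min_{x>0}e^x\left(\frac{bk}{x}+a\right)=(1+o(1))\,e\,(bk+a)$.
   Context: $s(\ell)=\sum_{j=1}^\ell\binom{\ell}{j}\frac1j$, $a=\frac12-\frac{1+s(\ell)}{2^{\ell+1}}$, $b=\frac{s(\ell)}{2^{\ell+1}}$. For $k=m\ell$, $F_k(p)$ is the expected number of iterations of the (1+1) EA with mutation rate $p$ on BlockLeadingOnes with block length $\ell$ to go from the first moment the fitness equals $m$ to the first moment it exceeds $m$ (this may be $0$). *)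

theory Defs
  imports "HOL-Analysis.Analysis" "HOL-Library.Landau_Symbols"
begin

definition s_BLO :: "nat \<Rightarrow> real" where
  "s_BLO l = (\<Sum>j=1..l. real (l choose j) / real j)"

definition a_BLO :: "nat \<Rightarrow> real" where
  "a_BLO l = 1/2 - (1 + s_BLO l) / 2 ^ (l + 1)"

definition b_BLO :: "nat \<Rightarrow> real" where
  "b_BLO l = s_BLO l / 2 ^ (l + 1)"

definition F_BLO :: "nat \<Rightarrow> real \<Rightarrow> real \<Rightarrow> real" where
  "F_BLO l k p = (1 - p) powr (- k) * (\<Sum>j=1..l. real (l choose j) / (1 - (1 - 2*p) ^ j))"

end

theory Submission
  imports Defs "HOL-Real_Asymp.Real_Asymp"
begin

text \<open>
  Since \<open>1 - (1-2p)^j \<le> 2jp\<close> and \<open>(1-p)^{-k} \<ge> e^{kp} \<ge> e\<cdot>kp\<close>, every \<open>F_k(p)\<close> is at least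
  \<open>e^{kp} s/(2p) \<ge> e s k/2 = 2^\<ell> e b k\<close>. Conversely Bernoulli's inequality gives
  \<open>1/(1-(1-2p)^j) \<le> 1/(2jp) + 1\<close>, so \<open>F_k(1/k) \<le> (1-1/k)^{-k} (s k/2 + 2^\<ell> - 1)\<close>, which is
  asymptotic to the lower bound. Both bounds are linear in \<open>k\<close> with the same slope, so the
  constant \<open>a\<close> does not affect the asymptotics. The second statement is the same sandwich with
  \<open>e^x(c/x + a) \<ge> e c\<close> and the choice \<open>x = 1\<close>.
\<close>

lemma exp_one_mult_le_exp: "exp 1 * x \<le> exp (x::real)"
proof -
  have "x \<le> exp (x - 1)" using exp_ge_add_one_self[of "x - 1"] by simp
  then have "exp 1 * x \<le> exp 1 * exp (x - 1)" by simp
  also have "\<dots> = exp x" by (simp add: exp_diff)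
  finally show ?thesis .
qed

lemma one_minus_power_le:
  fixes y :: real
  assumes "\<bar>y\<bar> \<le> 1"
  shows "1 - y ^ j \<le> real j * (1 - y)"
proof (induction j)
  case 0
  then show ?case by simp
next
  case (Suc j)
  have "y ^ j \<le> 1"
    using assms by (metis abs_ge_self order_trans power_abs power_le_one abs_ge_zero)
  then have "y ^ j * (1 - y) \<le> 1 - y"
    using assms mult_right_mono[of "y ^ j" 1 "1 - y"] by simp
  then show ?case using Suc by (simp add: algebra_simps)
qed

lemma inverse_one_minus_power_le:
  fixes q :: real
  assumes q: "0 < q" "q \<le> 1" and j: "j \<ge> 1"
  shows "1 / (1 - (1 - q) ^ j) \<le> 1 / (real j * q) + 1"
proof -
  have jq: "real j * q > 0" using q j by simp
  have "(1 - q) ^ j * (1 + real j * q) \<le> (1 - q) ^ j * (1 + q) ^ j"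
    using Bernoulli_inequality[of q j] q by (intro mult_left_mono) auto
  also have "\<dots> = (1 - q\<^sup>2) ^ j"
    by (simp add: power_mult_distrib[symmetric] power2_eq_square algebra_simps)
  also have "\<dots> \<le> 1"
    using q by (intro power_le_one) (auto simp: power2_eq_square mult_le_one)
  finally have "real j * q / (1 + real j * q) \<le> 1 - (1 - q) ^ j"
    using jq by (simp add: field_simps)
  moreover have "real j * q / (1 + real j * q) > 0" using jq by simp
  ultimately have "1 / (1 - (1 - q) ^ j) \<le> 1 / (real j * q / (1 + real j * q))"
    by (intro divide_left_mono mult_pos_pos) auto
  also have "\<dots> = 1 / (real j * q) + 1" using jq q j by (simp add: add_divide_distrib)
  finally show ?thesis .
qed

lemma sum_choose_atLeast_one: "(\<Sum>j=1..l. real (l choose j)) = 2 ^ l - 1"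
proof -
  have "{..l} = insert 0 {1..l}" by auto
  then have "(\<Sum>j\<le>l. real (l choose j)) = 1 + (\<Sum>j=1..l. real (l choose j))" by simp
  moreover have "(\<Sum>j\<le>l. real (l choose j)) = 2 ^ l"
    using choose_row_sum[of l] by (metis of_nat_numeral of_nat_power of_nat_sum)
  ultimately show ?thesis by simp
qed

lemma s_BLO_pos: "l \<ge> 1 \<Longrightarrow> s_BLO l > 0"
proof -
  assume "l \<ge> 1"
  then have "real (l choose 1) / real 1 \<le> s_BLO l"
    unfolding s_BLO_def by (intro member_le_sum) auto
  then show ?thesis using \<open>l \<ge> 1\<close> by simp
qed

lemma s_BLO_le: "s_BLO l \<le> 2 ^ l - 1"
proof -
  have "s_BLO l \<le> (\<Sum>j=1..l. real (l choose j))"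
    unfolding s_BLO_def by (intro sum_mono) (auto simp: divide_le_eq)
  also have "\<dots> = 2 ^ l - 1" by (rule sum_choose_atLeast_one)
  finally show ?thesis .
qed

lemma a_BLO_nonneg: "a_BLO l \<ge> 0"
proof -
  have "(1 + s_BLO l) / 2 ^ (l + 1) \<le> 2 ^ l / 2 ^ (l + 1)"
    using s_BLO_le[of l] by (intro divide_right_mono) auto
  then show ?thesis unfolding a_BLO_def by simp
qed

lemma sum_inverse_one_minus_power_ge:
  assumes "0 < p" "p < 1"
  shows "s_BLO l / (2 * p) \<le> (\<Sum>j=1..l. real (l choose j) / (1 - (1 - 2 * p) ^ j))"
  unfolding s_BLO_def sum_divide_distrib
proof (rule sum_mono)
  fix j assume j: "j \<in> {1..l}"
  have y: "\<bar>1 - 2 * p\<bar> < 1" using assms by auto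
  then have "\<bar>1 - 2 * p\<bar> ^ j < 1" using j by (subst power_less_one_iff) auto
  then have "0 < 1 - (1 - 2 * p) ^ j" by (simp add: power_abs[symmetric] abs_less_iff)
  moreover have "1 - (1 - 2 * p) ^ j \<le> real j * (2 * p)"
    using one_minus_power_le[of "1 - 2 * p" j] y by simp
  ultimately have "real (l choose j) / (real j * (2 * p))
                     \<le> real (l choose j) / (1 - (1 - 2 * p) ^ j)"
    using j assms by (intro divide_left_mono mult_pos_pos) auto
  then show "real (l choose j) / real j / (2 * p) \<le> real (l choose j) / (1 - (1 - 2 * p) ^ j)"
    by simp
qed

lemma sum_inverse_one_minus_power_le:
  assumes "0 < p" "p \<le> 1/2"
  shows "(\<Sum>j=1..l. real (l choose j) / (1 - (1 - 2 * p) ^ j)) \<le> s_BLO l / (2 * p) + (2 ^ l - 1)"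
proof -
  have "(\<Sum>j=1..l. real (l choose j) / (1 - (1 - 2 * p) ^ j))
      \<le> (\<Sum>j=1..l. real (l choose j) * (1 / (real j * (2 * p)) + 1))"
  proof (rule sum_mono)
    fix j assume "j \<in> {1..l}"
    then have "1 / (1 - (1 - 2 * p) ^ j) \<le> 1 / (real j * (2 * p)) + 1"
      using assms by (intro inverse_one_minus_power_le) auto
    then show "real (l choose j) / (1 - (1 - 2 * p) ^ j)
                 \<le> real (l choose j) * (1 / (real j * (2 * p)) + 1)"
      by (metis mult_left_mono of_nat_0_le_iff times_divide_eq_right mult_1_right)
  qed
  also have "\<dots> = s_BLO l / (2 * p) + (\<Sum>j=1..l. real (l choose j))"
    unfolding s_BLO_def by (simp add: sum.distrib sum_divide_distrib field_simps)
  finally show ?thesis unfolding sum_choose_atLeast_one .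
qed

lemma exp_mult_le_one_minus_powr:
  fixes p k :: real
  assumes "0 < p" "p < 1" "k \<ge> 0"
  shows "exp (k * p) \<le> (1 - p) powr (- k)"
proof -
  have "ln (1 - p) \<le> - p" using ln_le_minus_one[of "1 - p"] assms by simp
  then have "k * p \<le> - k * ln (1 - p)"
    using assms mult_left_mono[of "ln (1 - p)" "- p" k] by simp
  then show ?thesis using assms by (simp add: powr_def)
qed

lemma F_BLO_ge:
  assumes "0 < p" "p < 1" "k \<ge> 0"
  shows "exp 1 * s_BLO l / 2 * k \<le> F_BLO l k p"
proof -
  have s: "s_BLO l \<ge> 0" unfolding s_BLO_def by (intro sum_nonneg) auto
  have "exp 1 * s_BLO l / 2 * k = exp 1 * (k * p) * (s_BLO l / (2 * p))"
    using assms by (simp add: field_simps)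
  also have "\<dots> \<le> exp (k * p) * (s_BLO l / (2 * p))"
    using s assms by (intro mult_right_mono exp_one_mult_le_exp) auto
  also have "\<dots> \<le> F_BLO l k p"
    unfolding F_BLO_def using s assms
    by (intro mult_mono exp_mult_le_one_minus_powr sum_inverse_one_minus_power_ge) auto
  finally show ?thesis .
qed

lemma F_BLO_le:
  assumes "0 < p" "p \<le> 1/2"
  shows "F_BLO l k p \<le> (1 - p) powr (- k) * (s_BLO l / (2 * p) + (2 ^ l - 1))"
  unfolding F_BLO_def using assms
  by (intro mult_left_mono sum_inverse_one_minus_power_le) auto

lemma INF_F_BLO_ge:
  assumes "k \<ge> 0"
  shows "exp 1 * s_BLO l / 2 * k \<le> (INF p\<in>{0<..<1}. F_BLO l k p)"
  using assms by (intro cINF_greatest F_BLO_ge) auto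

lemma INF_F_BLO_le:
  assumes "k \<ge> 2"
  shows "(INF p\<in>{0<..<1}. F_BLO l k p) \<le> (1 - 1/k) powr (- k) * (s_BLO l / 2 * k + (2 ^ l - 1))"
proof -
  have "bdd_below (F_BLO l k ` {0<..<1})"
    by (rule bdd_belowI[of _ "exp 1 * s_BLO l / 2 * k"]) (use assms F_BLO_ge in force)
  then have "(INF p\<in>{0<..<1}. F_BLO l k p) \<le> F_BLO l k (1/k)"
    using assms by (intro cINF_lower) auto
  also have "\<dots> \<le> (1 - 1/k) powr (- k) * (s_BLO l / (2 * (1/k)) + (2 ^ l - 1))"
    using assms by (intro F_BLO_le) auto
  finally show ?thesis by simp
qed

lemma exp_one_mult_le_exp_mult_div_add:
  fixes c a x :: real
  assumes "c \<ge> 0" "a \<ge> 0" "x > 0"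
  shows "exp 1 * c \<le> exp x * (c / x + a)"
proof -
  have "exp 1 * c = exp 1 * x * (c / x)" using assms by simp
  also have "\<dots> \<le> exp x * (c / x)"
    using assms by (intro mult_right_mono exp_one_mult_le_exp) auto
  also have "\<dots> \<le> exp x * (c / x + a)" using assms by (intro mult_left_mono) auto
  finally show ?thesis .
qed

lemma INF_exp_mult_div_add_ge:
  fixes c a :: real
  assumes "c \<ge> 0" "a \<ge> 0"
  shows "exp 1 * c \<le> (INF x\<in>{0<..}. exp x * (c / x + a))"
  using assms by (intro cINF_greatest exp_one_mult_le_exp_mult_div_add) auto

lemma INF_exp_mult_div_add_le:
  fixes c a :: real
  assumes "c \<ge> 0" "a \<ge> 0"
  shows "(INF x\<in>{0<..}. exp x * (c / x + a)) \<le> exp 1 * (c + a)"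
proof -
  have "bdd_below ((\<lambda>x. exp x * (c / x + a)) ` {0<..})"
    by (rule bdd_belowI[of _ "exp 1 * c"]) (use assms exp_one_mult_le_exp_mult_div_add in force)
  then show ?thesis using cINF_lower[of "\<lambda>x. exp x * (c / x + a)" "{0<..}" 1] by simp
qed

lemma asymp_equiv_linear_sandwich:
  fixes f u :: "real \<Rightarrow> real"
  assumes "c > 0"
    and "eventually (\<lambda>k. c * k \<le> f k) at_top"
    and "eventually (\<lambda>k. f k \<le> u k) at_top"
    and "(\<lambda>k. c * k) \<sim>[at_top] u"
  shows "f \<sim>[at_top] (\<lambda>k. c * k + d)"
proof -
  have "eventually (\<lambda>k. c * k \<ge> 0) at_top"
    using eventually_ge_at_top[of 0] by eventually_elim (use \<open>c > 0\<close> in simp)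
  then have "f \<sim>[at_top] (\<lambda>k. c * k)"
    using assms(2-4) by (rule asymp_equiv_sandwich)
  also have "(\<lambda>k. c * k) \<sim>[at_top] (\<lambda>k. c * k + d)"
    using \<open>c > 0\<close> by real_asymp
  finally show ?thesis .
qed

theorem mainTheorem17:
  fixes l :: nat
  assumes "l \<ge> 1"
  shows "((\<lambda>k::real. INF p\<in>{0<..<1::real}. F_BLO l k p)
           \<sim>[at_top] (\<lambda>k. 2 ^ l * exp 1 * (b_BLO l * k + a_BLO l))) \<and>
         ((\<lambda>k::real. INF x\<in>{(0::real)<..}. exp x * (b_BLO l * k / x + a_BLO l))
           \<sim>[at_top] (\<lambda>k. exp 1 * (b_BLO l * k + a_BLO l)))"
proof
  have s: "s_BLO l > 0" using s_BLO_pos[OF assms] .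
  have b: "b_BLO l > 0" using s by (simp add: b_BLO_def)
  have a: "a_BLO l \<ge> 0" by (rule a_BLO_nonneg)
  have "(\<lambda>k::real. INF p\<in>{0<..<1::real}. F_BLO l k p)
          \<sim>[at_top] (\<lambda>k. exp 1 * s_BLO l / 2 * k + 2 ^ l * exp 1 * a_BLO l)"
  proof (rule asymp_equiv_linear_sandwich)
    show "eventually (\<lambda>k. exp 1 * s_BLO l / 2 * k \<le> (INF p\<in>{0<..<1}. F_BLO l k p)) at_top"
      using eventually_ge_at_top[of 0] by eventually_elim (rule INF_F_BLO_ge)
    show "eventually (\<lambda>k. (INF p\<in>{0<..<1}. F_BLO l k p)
            \<le> (1 - 1/k) powr (- k) * (s_BLO l / 2 * k + (2 ^ l - 1))) at_top"
      using eventually_ge_at_top[of 2] by eventually_elim (rule INF_F_BLO_le)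
    show "(\<lambda>k. exp 1 * s_BLO l / 2 * k)
            \<sim>[at_top] (\<lambda>k. (1 - 1/k) powr (- k) * (s_BLO l / 2 * k + (2 ^ l - 1)))"
      using s by real_asymp
  qed (use s in simp)
  moreover have "s_BLO l = 2 ^ (l + 1) * b_BLO l" by (simp add: b_BLO_def)
  ultimately show "(\<lambda>k::real. INF p\<in>{0<..<1::real}. F_BLO l k p)
                    \<sim>[at_top] (\<lambda>k. 2 ^ l * exp 1 * (b_BLO l * k + a_BLO l))"
    by (simp add: algebra_simps)
  have "(\<lambda>k::real. INF x\<in>{0<..}. exp x * (b_BLO l * k / x + a_BLO l))
          \<sim>[at_top] (\<lambda>k. exp 1 * b_BLO l * k + exp 1 * a_BLO l)"
  proof (rule asymp_equiv_linear_sandwich)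
    show "eventually (\<lambda>k. exp 1 * b_BLO l * k
            \<le> (INF x\<in>{0<..}. exp x * (b_BLO l * k / x + a_BLO l))) at_top"
      using eventually_ge_at_top[of 0]
      by eventually_elim (use INF_exp_mult_div_add_ge a b in \<open>simp add: mult.assoc\<close>)
    show "eventually (\<lambda>k. (INF x\<in>{0<..}. exp x * (b_BLO l * k / x + a_BLO l))
            \<le> exp 1 * (b_BLO l * k + a_BLO l)) at_top"
      using eventually_ge_at_top[of 0] by eventually_elim (use INF_exp_mult_div_add_le a b in simp)
    show "(\<lambda>k. exp 1 * b_BLO l * k) \<sim>[at_top] (\<lambda>k. exp 1 * (b_BLO l * k + a_BLO l))"
      using b by real_asymp
  qed (use b in simp)
  then show "(\<lambda>k::real. INF x\<in>{(0::real)<..}. exp x * (b_BLO l * k / x + a_BLO l))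
               \<sim>[at_top] (\<lambda>k. exp 1 * (b_BLO l * k + a_BLO l))"
    by (simp add: algebra_simps)
qed

end
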